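(* Let $(G;+)$ be a commutative groupoid and let $M, M'$ be multisets of cardinality $3$ over $G$. Then the deck of $M$ equals the deck of $M'$ if and only if one of the following holds: (i) $M = M'$; (ii) $M = \langle r,s,t\rangle$ and $M' = \langle r, r+s, r+t\rangle$ for some $r,s,t \in G$ with $r + (r+s) = s$, $r + (r+t) = t$ and $(r+s)+(r+t) = s+t$; (iii) $M = \langle r,s,t\rangle$ and $M' = \langle r+s, r+t, s+t\rangle$ for some $r,s,t \in G$ with $(r+s)+(r+t) = r$, $(r+s)+(s+t) = s$ and $(r+t)+(s+t) = t$.
   Context: A (finite) multiset $M$ over a set $X$ is a function $\mathbf{1}_M \colon X \to \mathbb{N}$ with finite support; $|M| = \sum_x \mathbf{1}_M(x)$ is its cardinality. $\langle x_1,\dots,x_k\rangle$ denotes the multiset in which each element occurs as often as it appears in the list. A commutative groupoid is a set $G$ with a commutative binary operation $+$ (not necessarily associative). For a 3-multiset $M=\langle a,b,c\rangle$ over $G$ its cards are $\langle a, b+c\rangle$, $\langle b, a+c\rangle$, $\langle c, a+b\rangle$, and its deck is the multiset of these three cards. (In general, for $M = \langle m_1,\dots,m_n\rangle$, the card $M_{\{i,j\}}$ replaces $m_i, m_j$ by the single element $m_i+m_j$, and the deck is the multiset of all $\binom n2$ cards.) *)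

theory Defs
  imports Main "HOL-Library.Multiset"
begin

definition comm_groupoid :: "('a \<Rightarrow> 'a \<Rightarrow> 'a) \<Rightarrow> bool" where
  "comm_groupoid f \<longleftrightarrow> (\<forall>x y. f x y = f y x)"

definition card_of_list :: "('a \<Rightarrow> 'a \<Rightarrow> 'a) \<Rightarrow> 'a list \<Rightarrow> nat \<Rightarrow> nat \<Rightarrow> 'a multiset" where
  "card_of_list f xs i j =
     add_mset (f (xs ! i) (xs ! j)) (mset (map (\<lambda>k. xs ! k) (filter (\<lambda>k. k \<noteq> i \<and> k \<noteq> j) [0..<length xs])))"

definition deck_of_list :: "('a \<Rightarrow> 'a \<Rightarrow> 'a) \<Rightarrow> 'a list \<Rightarrow> 'a multiset multiset" where
  "deck_of_list f xs =
     mset (map (\<lambda>(i, j). card_of_list f xs i j)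
       (filter (\<lambda>(i, j). i < j) (List.product [0..<length xs] [0..<length xs])))"

definition deck :: "('a \<Rightarrow> 'a \<Rightarrow> 'a) \<Rightarrow> 'a multiset \<Rightarrow> 'a multiset multiset" where
  "deck f M = deck_of_list f (SOME xs. mset xs = M)"

end

theory Submission
  imports Defs
begin

text \<open>The deck of \<open>\<langle>a,b,c\<rangle>\<close> is \<open>\<langle>\<langle>a,b+c\<rangle>,\<langle>b,a+c\<rangle>,\<langle>c,a+b\<rangle>\<rangle>\<close>. If two such decks
  agree, pair up equal cards; each equality of two-element cards \<open>\<langle>x, y+z\<rangle> = \<langle>x', y'+z'\<rangle>\<close>
  either matches \<open>x = x'\<close> or crosses, \<open>x = y'+z'\<close> and \<open>x' = y+z\<close>. With at most one
  crossing the multisets coincide; with exactly two crossings the uncrossed element is the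
  pivot \<open>r\<close> of case (ii); with three crossings we are in case (iii).\<close>

lemma length_eq_3_obtain:
  assumes "length xs = 3"
  obtains x y z where "xs = [x, y, z]"
  using assms by (metis (no_types, lifting) length_0_conv length_Suc_conv numeral_3_eq_3)

lemma size_eq_3_obtain:
  assumes "size M = 3"
  obtains a b c where "M = {#a, b, c#}"
proof -
  obtain xs where xs: "mset xs = M" using ex_mset by blast
  with assms have "length xs = 3" by auto
  then obtain a b c where "xs = [a, b, c]" by (rule length_eq_3_obtain)
  with xs show thesis using that by (auto simp: add_mset_commute)
qed

lemma mset_eq_pair_iff: "{#x, y#} = {#a, b#} \<longleftrightarrow> (x = a \<and> y = b) \<or> (x = b \<and> y = a)"
  by (auto simp: add_eq_conv_diff split: if_splits)

lemma mset_eq_triple_cases: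
  assumes "{#x, y, z#} = {#a, b, c#}"
  shows "(x = a \<and> y = b \<and> z = c) \<or> (x = a \<and> y = c \<and> z = b) \<or> (x = b \<and> y = a \<and> z = c)
    \<or> (x = b \<and> y = c \<and> z = a) \<or> (x = c \<and> y = a \<and> z = b) \<or> (x = c \<and> y = b \<and> z = a)"
  using assms by (auto simp: add_eq_conv_diff split: if_splits)

lemma deck_of_list_three:
  "deck_of_list f [x, y, z] = {#{#f x y, z#}, {#f x z, y#}, {#f y z, x#}#}"
  by (simp add: deck_of_list_def card_of_list_def upt_rec)

lemma deck_triple:
  assumes "comm_groupoid f"
  shows "deck f {#a, b, c#} = {#{#a, f b c#}, {#b, f a c#}, {#c, f a b#}#}"
proof -
  have comm: "f x y = f y x" for x y
    using assms by (simp add: comm_groupoid_def)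
  define xs where "xs = (SOME xs. mset xs = {#a, b, c#})"
  have "mset xs = {#a, b, c#}"
    unfolding xs_def by (rule someI_ex) (rule ex_mset)
  moreover from this have "length xs = 3"
    by (metis size_mset size_add_mset size_empty numeral_3_eq_3 One_nat_def)
  then obtain x y z where xyz: "xs = [x, y, z]" by (rule length_eq_3_obtain)
  ultimately have "{#x, y, z#} = {#a, b, c#}"
    by (simp add: add_mset_commute)
  then have perm: "(x = a \<and> y = b \<and> z = c) \<or> (x = a \<and> y = c \<and> z = b) \<or> (x = b \<and> y = a \<and> z = c)
    \<or> (x = b \<and> y = c \<and> z = a) \<or> (x = c \<and> y = a \<and> z = b) \<or> (x = c \<and> y = b \<and> z = a)"
    by (rule mset_eq_triple_cases)
  have "deck f {#a, b, c#} = {#{#f x y, z#}, {#f x z, y#}, {#f y z, x#}#}"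
    unfolding deck_def xs_def[symmetric] xyz deck_of_list_three ..
  also have "\<dots> = {#{#a, f b c#}, {#b, f a c#}, {#c, f a b#}#}"
    using perm by (elim disjE) (auto simp: comm add_mset_commute)
  finally show ?thesis .
qed

definition deck_twins :: "('a \<Rightarrow> 'a \<Rightarrow> 'a) \<Rightarrow> 'a multiset \<Rightarrow> 'a multiset \<Rightarrow> bool" where
  "deck_twins f M M' \<longleftrightarrow> M = M'
      \<or> (\<exists>r s t. M = {#r, s, t#} \<and> M' = {#r, f r s, f r t#}
            \<and> f r (f r s) = s \<and> f r (f r t) = t \<and> f (f r s) (f r t) = f s t)
      \<or> (\<exists>r s t. M = {#r, s, t#} \<and> M' = {#f r s, f r t, f s t#}
            \<and> f (f r s) (f r t) = r \<and> f (f r s) (f s t) = s \<and> f (f r t) (f s t) = t)"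

lemma deck_twins_pivot:
  assumes "comm_groupoid f"
    and r': "r' = r" and s': "s' = f r t" and t': "t' = f r s"
    and "s = f r' t'" "t = f r' s'" "f s t = f s' t'"
  shows "deck_twins f {#r, s, t#} {#r', s', t'#}"
proof -
  have comm: "f x y = f y x" for x y
    using assms(1) by (simp add: comm_groupoid_def)
  from assms(5-7) have "f r (f r s) = s" "f r (f r t) = t" "f (f r s) (f r t) = f s t"
    unfolding r' s' t' by (simp_all add: comm)
  then have "deck_twins f {#r, s, t#} {#r, f r s, f r t#}"
    unfolding deck_twins_def by blast
  then show ?thesis
    unfolding r' s' t' by (simp add: add_mset_commute)
qed

lemma deck_twins_sums:
  assumes "comm_groupoid f"
    and r': "r' = f s t" and s': "s' = f r t" and t': "t' = f r s"
    and "r = f s' t'" "s = f r' t'" "t = f r' s'"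
  shows "deck_twins f {#r, s, t#} {#r', s', t'#}"
proof -
  have comm: "f x y = f y x" for x y
    using assms(1) by (simp add: comm_groupoid_def)
  from assms(5-7) have "f (f r s) (f r t) = r" "f (f r s) (f s t) = s" "f (f r t) (f s t) = t"
    unfolding r' s' t' by (simp_all add: comm)
  then have "deck_twins f {#r, s, t#} {#f r s, f r t, f s t#}"
    unfolding deck_twins_def by blast
  then show ?thesis
    unfolding r' s' t' by (simp add: add_mset_commute)
qed

lemma deck_twins_if_cards_eq:
  assumes comm: "comm_groupoid f"
    and "{#a, f b c#} = {#a', f b' c'#}"
    and "{#b, f a c#} = {#b', f a' c'#}"
    and "{#c, f a b#} = {#c', f a' b'#}"
  shows "deck_twins f {#a, b, c#} {#a', b', c'#}"
proof -
  have cm: "f x y = f y x" for x y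
    using comm by (simp add: comm_groupoid_def)
  from assms(2-4) show ?thesis
    unfolding mset_eq_pair_iff
  proof (elim disjE conjE)
    assume "a = f b' c'" "f b c = a'" "b = f a' c'" "f a c = b'" "c = f a' b'" "f a b = c'"
    then show ?thesis by (intro deck_twins_sums[OF comm]) simp_all
  next
    assume "a = a'" "f b c = f b' c'" "b = f a' c'" "f a c = b'" "c = f a' b'" "f a b = c'"
    then show ?thesis by (intro deck_twins_pivot[OF comm]) simp_all
  next
    assume "a = f b' c'" "f b c = a'" "b = b'" "f a c = f a' c'" "c = f a' b'" "f a b = c'"
    then have "deck_twins f {#b, a, c#} {#b', a', c'#}"
      by (intro deck_twins_pivot[OF comm]) (simp_all add: cm)
    then show ?thesis by (simp add: add_mset_commute)
  next
    assume "a = f b' c'" "f b c = a'" "b = f a' c'" "f a c = b'" "c = c'" "f a b = f a' b'"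
    then have "deck_twins f {#c, a, b#} {#c', a', b'#}"
      by (intro deck_twins_pivot[OF comm]) (simp_all add: cm)
    then show ?thesis by (simp add: add_mset_commute)
  qed (simp_all add: deck_twins_def)
qed

lemma deck_twins_if_deck_eq:
  assumes comm: "comm_groupoid f"
    and "{#{#a, f b c#}, {#b, f a c#}, {#c, f a b#}#}
       = {#{#a', f b' c'#}, {#b', f a' c'#}, {#c', f a' b'#}#}"
  shows "deck_twins f {#a, b, c#} {#a', b', c'#}"
proof -
  have cm: "f x y = f y x" for x y
    using comm by (simp add: comm_groupoid_def)
  from mset_eq_triple_cases[OF assms(2)] show ?thesis
    using deck_twins_if_cards_eq[OF comm, of a b c a' b' c']
      deck_twins_if_cards_eq[OF comm, of a b c a' c' b']
      deck_twins_if_cards_eq[OF comm, of a b c b' a' c']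
      deck_twins_if_cards_eq[OF comm, of a b c b' c' a']
      deck_twins_if_cards_eq[OF comm, of a b c c' a' b']
      deck_twins_if_cards_eq[OF comm, of a b c c' b' a']
    by (elim disjE conjE) (simp_all add: cm add_mset_commute)
qed

lemma deck_eq_if_deck_twins:
  assumes comm: "comm_groupoid f" and "deck_twins f M M'"
  shows "deck f M = deck f M'"
proof -
  have cm: "f x y = f y x" for x y
    using comm by (simp add: comm_groupoid_def)
  from assms(2) show ?thesis
    unfolding deck_twins_def
  proof (elim disjE exE conjE)
    fix r s t
    assume "M = {#r, s, t#}" "M' = {#r, f r s, f r t#}"
      "f r (f r s) = s" "f r (f r t) = t" "f (f r s) (f r t) = f s t"
    then show ?thesis by (simp add: deck_triple[OF comm] cm add_mset_commute)
  next
    fix r s t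
    assume "M = {#r, s, t#}" "M' = {#f r s, f r t, f s t#}"
      "f (f r s) (f r t) = r" "f (f r s) (f s t) = s" "f (f r t) (f s t) = t"
    then show ?thesis by (simp add: deck_triple[OF comm] cm add_mset_commute)
  qed simp
qed

theorem mainTheorem5:
  fixes add :: "'a \<Rightarrow> 'a \<Rightarrow> 'a" (infixl "\<oplus>" 65)
    and M M' :: "'a multiset"
  assumes "comm_groupoid (\<oplus>)"
    and "size M = 3" and "size M' = 3"
  shows "deck (\<oplus>) M = deck (\<oplus>) M' \<longleftrightarrow>
     (M = M'
      \<or> (\<exists>r s t. M = {#r, s, t#} \<and> M' = {#r, r \<oplus> s, r \<oplus> t#}
            \<and> r \<oplus> (r \<oplus> s) = s \<and> r \<oplus> (r \<oplus> t) = t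
            \<and> (r \<oplus> s) \<oplus> (r \<oplus> t) = s \<oplus> t)
      \<or> (\<exists>r s t. M = {#r, s, t#} \<and> M' = {#r \<oplus> s, r \<oplus> t, s \<oplus> t#}
            \<and> (r \<oplus> s) \<oplus> (r \<oplus> t) = r \<and> (r \<oplus> s) \<oplus> (s \<oplus> t) = s
            \<and> (r \<oplus> t) \<oplus> (s \<oplus> t) = t))"
proof -
  obtain a b c where M: "M = {#a, b, c#}" using size_eq_3_obtain[OF assms(2)] .
  obtain a' b' c' where M': "M' = {#a', b', c'#}" using size_eq_3_obtain[OF assms(3)] .
  have "deck (\<oplus>) M = deck (\<oplus>) M' \<longleftrightarrow> deck_twins (\<oplus>) M M'"
  proof
    assume "deck (\<oplus>) M = deck (\<oplus>) M'"
    then show "deck_twins (\<oplus>) M M'"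
      unfolding M M' deck_triple[OF assms(1)] by (rule deck_twins_if_deck_eq[OF assms(1)])
  qed (rule deck_eq_if_deck_twins[OF assms(1)])
  then show ?thesis unfolding deck_twins_def .
qed

end
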